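(* Let $K\subset\mathbb{R}^d$ be compact, let $m\ge1$, let $k_1,\dots,k_m\ge 0$ be integers, let $\alpha_1,\dots,\alpha_m\in\mathbb{R}$, and for each $i$ let $h^{(k_i)}$ be a $k_i$-order hinge function on $\mathbb{R}^d$. Then there exists a two-layer Morph-Net all of whose morphological neurons are dilation neurons (no erosion neurons) whose output $N({\bm{x}})$ satisfies $N({\bm{x}})=\sum_{i=1}^m\alpha_i h^{(k_i)}({\bm{x}})$ for all ${\bm{x}}\in K$.
   Context: For ${\bm{x}}\in\mathbb{R}^p$ write ${\bm{x}}'=(x_1,\dots,x_p,0)\in\mathbb{R}^{p+1}$ (augmented input). For a structuring element ${\bm{s}}\in\mathbb{R}^{p+1}$, the dilation neuron computes ${\bm{x}}\oplus{\bm{s}}=\max_{1\le k\le p+1}(x'_k+s_k)$ and the erosion neuron computes ${\bm{x}}\ominus{\bm{s}}=\min_{1\le k\le p+1}(x'_k-s_k)$. A dilation-erosion layer applied to ${\bm{y}}\in\mathbb{R}^p$ consists of finitely many dilation and erosion neurons (each with its own structuring element in $\mathbb{R}^{p+1}$) all applied to ${\bm{y}}$, and outputs the vector of their values. A linear combination layer is an affine map ${\bm{z}}\mapsto A{\bm{z}}+{\bm{c}}$. A two-layer Morph-Net $N:\mathbb{R}^d\to\mathbb{R}$ is the composition: dilation-erosion layer on ${\bm{x}}\in\mathbb{R}^d$, then a linear combination layer, then a second dilation-erosion layer applied to the resulting vector, then a linear combination layer with a single real output. A $k$-order hinge function on $\mathbb{R}^d$ is a function of the form $h^{(k)}({\bm{x}})=\pm\max\{{\bm{w}}_1^\top{\bm{x}}+b_1,\dots,{\bm{w}}_{k+1}^\top{\bm{x}}+b_{k+1}\}$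 with ${\bm{w}}_r\in\mathbb{R}^d$, $b_r\in\mathbb{R}$. *)

theory Defs
  imports "HOL-Analysis.Analysis"
begin

text \<open>The augmented input x' has the extra coordinate None with value 0.
  A structuring element is a function on the augmented index set.\<close>

definition aug :: "('i \<Rightarrow> real) \<Rightarrow> 'i option \<Rightarrow> real" where
  "aug x k = (case k of None \<Rightarrow> 0 | Some i \<Rightarrow> x i)"

definition dil :: "'i set \<Rightarrow> ('i \<Rightarrow> real) \<Rightarrow> ('i option \<Rightarrow> real) \<Rightarrow> real" where
  "dil I x s = Max ((\<lambda>k. aug x k + s k) ` insert None (Some ` I))"

definition ero :: "'i set \<Rightarrow> ('i \<Rightarrow> real) \<Rightarrow> ('i option \<Rightarrow> real) \<Rightarrow> real" where
  "ero I x s = Min ((\<lambda>k. aug x k - s k) ` insert None (Some ` I))"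

datatype 'i neuron = Dil "'i option \<Rightarrow> real" | Ero "'i option \<Rightarrow> real"

fun neuron_apply :: "'i set \<Rightarrow> 'i neuron \<Rightarrow> ('i \<Rightarrow> real) \<Rightarrow> real" where
  "neuron_apply I (Dil s) x = dil I x s"
| "neuron_apply I (Ero s) x = ero I x s"

fun is_dil :: "'i neuron \<Rightarrow> bool" where
  "is_dil (Dil _) = True"
| "is_dil (Ero _) = False"

text \<open>Two-layer Morph-Net on real^'d:
  MorphNet L1 A1 c1 q L2 a c :
  L1 = first dilation-erosion layer (neurons on the input, index set UNIV :: 'd set),
  (A1, c1) = linear combination layer with q outputs (input dimension = length L1),
  L2 = second dilation-erosion layer on the q-dimensional vector (index set {..<q}),
  (a, c) = final linear layer with a single real output.\<close>

datatype 'd morphnet =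
  MorphNet "'d neuron list" "nat \<Rightarrow> nat \<Rightarrow> real" "nat \<Rightarrow> real" nat
           "nat neuron list" "nat \<Rightarrow> real" real

fun morphnet_eval :: "'d::finite morphnet \<Rightarrow> real^'d \<Rightarrow> real" where
  "morphnet_eval (MorphNet L1 A1 c1 q L2 a c) x =
     (let z1 = (\<lambda>j. neuron_apply UNIV (L1 ! j) (\<lambda>i. x $ i));
          y  = (\<lambda>i. (\<Sum>j<length L1. A1 i j * z1 j) + c1 i);
          z2 = (\<lambda>j. neuron_apply {..<q} (L2 ! j) y)
      in (\<Sum>j<length L2. a j * z2 j) + c)"

fun dilation_only :: "'d morphnet \<Rightarrow> bool" where
  "dilation_only (MorphNet L1 A1 c1 q L2 a c) =
     ((\<forall>n\<in>set L1. is_dil n) \<and> (\<forall>n\<in>set L2. is_dil n))"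

definition is_hinge :: "nat \<Rightarrow> (real^'d \<Rightarrow> real) \<Rightarrow> bool" where
  "is_hinge k h \<longleftrightarrow> (\<exists>\<sigma> (w :: nat \<Rightarrow> real^'d) (b :: nat \<Rightarrow> real).
      (\<sigma> = 1 \<or> \<sigma> = -1) \<and> h = (\<lambda>x. \<sigma> * Max ((\<lambda>r. w r \<bullet> x + b r) ` {..k})))"

end

theory Submission
  imports Defs
begin

text \<open>A hinge function is a signed maximum of finitely many affine functions, so a linear
  combination of hinge functions is a linear combination of such maxima. A dilation neuron whose
  structuring element is 0 on a set T of coordinates and a large negative constant elsewhere
  (including the augmented coordinate) computes the maximum over T of its input, provided the
  input stays bounded, which on a compact K it does. The first layer uses such selectors with
  singleton T to copy the input coordinates, the linear layer forms every affine function
  occurring in the hinges, and the second layer takes the maximum of each group.\<close>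

definition selector :: "real \<Rightarrow> 'i set \<Rightarrow> 'i option \<Rightarrow> real" where
  "selector M T k = (case k of None \<Rightarrow> -M | Some i \<Rightarrow> if i \<in> T then 0 else -M)"

lemma dil_selector:
  assumes "finite I" and "T \<subseteq> I" and "T \<noteq> {}"
    and bound: "\<forall>i\<in>I. \<bar>v i\<bar> \<le> C" and "2 * C \<le> M"
  shows "dil I v (selector M T) = Max (v ` T)"
proof -
  have "finite T" using assms(1,2) finite_subset by blast
  then have "Max (v ` T) \<in> v ` T" using \<open>T \<noteq> {}\<close> by simp
  then obtain t where t: "t \<in> T" "v t = Max (v ` T)" by (metis imageE)
  have "\<bar>v t\<bar> \<le> C" using bound t(1) assms(2) by blast
  show ?thesis unfolding dil_def
  proof (rule Max_eqI)
    fix y assume "y \<in> (\<lambda>k. aug v k + selector M T k) ` insert None (Some ` I)"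
    then show "y \<le> Max (v ` T)"
      using \<open>finite T\<close> \<open>\<bar>v t\<bar> \<le> C\<close> t bound \<open>2 * C \<le> M\<close>
      by (force simp: aug_def selector_def abs_le_iff)
  next
    show "Max (v ` T) \<in> (\<lambda>k. aug v k + selector M T k) ` insert None (Some ` I)"
      using t assms(2) by (intro image_eqI[of _ _ "Some t"]) (auto simp: aug_def selector_def)
  qed (use assms(1) in auto)
qed

lemma sum_enumeration_inner:
  fixes w x :: "real^'d::finite" and es :: "'d list"
  assumes "distinct es" and "set es = UNIV"
  shows "(\<Sum>j<length es. w $ (es ! j) * x $ (es ! j)) = w \<bullet> x"
proof -
  have "bij_betw ((!) es) {..<length es} UNIV"
    using bij_betw_nth[OF assms(1)] assms(2) by (simp add: lessThan_atLeast0)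
  then show ?thesis
    by (simp add: sum.reindex_bij_betw[of "(!) es" _ _ "\<lambda>i. w $ i * x $ i"] inner_vec_def)
qed

lemma bounded_affine_family:
  fixes K :: "(real^'d::finite) set"
  assumes "bounded K" and "finite P"
  obtains C where "\<forall>x\<in>K. \<forall>p\<in>P. \<bar>w p \<bullet> x + b p\<bar> \<le> C"
proof -
  obtain B where B: "\<forall>x\<in>K. norm x \<le> B"
    using assms(1) bounded_iff by blast
  have "\<bar>w p \<bullet> x + b p\<bar> \<le> (\<Sum>p\<in>P. norm (w p) * \<bar>B\<bar> + \<bar>b p\<bar>)"
    if "x \<in> K" "p \<in> P" for x p
  proof -
    have "\<bar>w p \<bullet> x + b p\<bar> \<le> norm (w p) * norm x + \<bar>b p\<bar>"
      using Cauchy_Schwarz_ineq2[of "w p" x] by linarith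
    also have "\<dots> \<le> norm (w p) * \<bar>B\<bar> + \<bar>b p\<bar>"
      using B that(1) by (intro add_right_mono mult_left_mono) auto
    also have "\<dots> \<le> (\<Sum>p\<in>P. norm (w p) * \<bar>B\<bar> + \<bar>b p\<bar>)"
      using assms(2) that(2) by (intro member_le_sum) auto
    finally show ?thesis .
  qed
  then show ?thesis using that by blast
qed

lemma morphnet_eval_selector_net:
  fixes x :: "real^'d::finite" and es :: "'d list"
    and A :: "nat \<Rightarrow> nat \<Rightarrow> real" and c :: "nat \<Rightarrow> real"
  defines "y \<equiv> \<lambda>p. (\<Sum>j<length es. A p j * x $ (es ! j)) + c p"
  assumes coords: "\<forall>i. \<bar>x $ i\<bar> \<le> B" and "2 * B \<le> Mx"
    and groups: "\<forall>i<m. T i \<subseteq> {..<q} \<and> T i \<noteq> {}"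
    and hidden: "\<forall>p<q. \<bar>y p\<bar> \<le> C" and "2 * C \<le> My"
  shows "morphnet_eval (MorphNet (map (\<lambda>i. Dil (selector Mx {i})) es) A c q
            (map (\<lambda>i. Dil (selector My (T i))) [0..<m]) a c0) x
         = (\<Sum>i<m. a i * Max (y ` T i)) + c0"
proof -
  have first_layer: "dil UNIV (\<lambda>i. x $ i) (selector Mx {i}) = x $ i" for i
    using dil_selector[of UNIV "{i}" "\<lambda>i. x $ i" B Mx] coords \<open>2 * B \<le> Mx\<close> by simp
  have second_layer: "dil {..<q} y (selector My (T i)) = Max (y ` T i)"
    if "i < m" for i
    using dil_selector[of "{..<q}" "T i" y C My] groups hidden \<open>2 * C \<le> My\<close> that by simp
  have hidden_layer: "(\<lambda>p. (\<Sum>j<length es. A p j *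
      neuron_apply UNIV (map (\<lambda>i. Dil (selector Mx {i})) es ! j) (\<lambda>i. x $ i)) + c p) = y"
    by (auto simp: y_def first_layer intro!: sum.cong)
  show ?thesis
    unfolding morphnet_eval.simps Let_def length_map hidden_layer
    by (intro arg_cong2[where f="(+)"] sum.cong) (simp_all add: second_layer del: upt_Suc)
qed

lemma dilation_morphnet_sum_of_max_affine:
  fixes K :: "(real^'d::finite) set"
    and W :: "nat \<Rightarrow> nat \<Rightarrow> real^'d" and b :: "nat \<Rightarrow> nat \<Rightarrow> real"
  assumes "bounded K"
  shows "\<exists>N :: 'd morphnet. dilation_only N \<and>
           (\<forall>x\<in>K. morphnet_eval N x = (\<Sum>i<m. a i * Max ((\<lambda>r. W i r \<bullet> x + b i r) ` {..k i})))"
proof -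
  obtain es :: "'d list" where es: "distinct es" "set es = UNIV"
    using finite_distinct_list[of "UNIV :: 'd set"] by auto
  \<comment> \<open>Hidden unit \<open>prod_encode (i, r)\<close> computes the affine piece \<open>W i r \<bullet> x + b i r\<close>.\<close>
  define T where "T i = (\<lambda>r. prod_encode (i, r)) ` {..k i}" for i
  obtain q where q: "(\<Union>i<m. T i) \<subseteq> {..<q}"
    using finite_nat_bounded[of "\<Union>i<m. T i"] by (auto simp: T_def)
  define W' where "W' p = case_prod W (prod_decode p)" for p
  define b' where "b' p = case_prod b (prod_decode p)" for p
  define A where "A p j = W' p $ (es ! j)" for p j
  have hidden: "(\<Sum>j<length es. A p j * x $ (es ! j)) + b' p = W' p \<bullet> x + b' p" for p x
    using sum_enumeration_inner[OF es] by (simp add: A_def)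
  obtain B where "\<forall>x\<in>K. norm x \<le> B"
    using assms bounded_iff by blast
  then have B: "\<forall>x\<in>K. \<forall>i. \<bar>x $ i\<bar> \<le> B"
    using component_le_norm_cart order_trans by blast
  obtain C where C: "\<forall>x\<in>K. \<forall>p\<in>{..<q}. \<bar>W' p \<bullet> x + b' p\<bar> \<le> C"
    using bounded_affine_family[OF assms, of "{..<q}"] by blast
  define N :: "'d morphnet" where
    "N = MorphNet (map (\<lambda>i. Dil (selector (2 * B) {i})) es) A b' q
           (map (\<lambda>i. Dil (selector (2 * C) (T i))) [0..<m]) a 0"
  have "morphnet_eval N x = (\<Sum>i<m. a i * Max ((\<lambda>r. W i r \<bullet> x + b i r) ` {..k i}))"
    if "x \<in> K" for x
  proof -
    have coords: "\<forall>i. \<bar>x $ i\<bar> \<le> B" using B that by blast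
    have groups: "\<forall>i<m. T i \<subseteq> {..<q} \<and> T i \<noteq> {}" using q by (auto simp: T_def)
    have "\<forall>p<q. \<bar>(\<Sum>j<length es. A p j * x $ (es ! j)) + b' p\<bar> \<le> C"
      using C that by (simp add: hidden)
    from morphnet_eval_selector_net[OF coords order_refl groups this order_refl]
    have "morphnet_eval N x = (\<Sum>i<m. a i * Max ((\<lambda>p. W' p \<bullet> x + b' p) ` T i))"
      unfolding N_def hidden by simp
    then show ?thesis
      by (simp add: T_def image_comp W'_def b'_def comp_def)
  qed
  moreover have "dilation_only N" by (simp add: N_def)
  ultimately show ?thesis by blast
qed

theorem lemma1:
  fixes K :: "(real^'d) set" and m :: nat and k :: "nat \<Rightarrow> nat"
    and \<alpha> :: "nat \<Rightarrow> real" and h :: "nat \<Rightarrow> real^'d \<Rightarrow> real"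
  assumes "compact K" and "m \<ge> 1"
    and "\<forall>i\<in>{1..m}. is_hinge (k i) (h i)"
  shows "\<exists>N :: 'd morphnet. dilation_only N \<and>
           (\<forall>x\<in>K. morphnet_eval N x = (\<Sum>i=1..m. \<alpha> i * h i x))"
proof -
  have "\<forall>i\<in>{1..m}. \<exists>\<sigma> W b. h i = (\<lambda>x. \<sigma> * Max ((\<lambda>r. W r \<bullet> x + b r) ` {..k i}))"
    using assms(3) unfolding is_hinge_def by blast
  then obtain \<sigma> W b where hinge:
    "\<forall>i\<in>{1..m}. h i = (\<lambda>x. \<sigma> i * Max ((\<lambda>r. W i r \<bullet> x + b i r) ` {..k i}))"
    by metis
  obtain N :: "'d morphnet" where N: "dilation_only N"
    "\<forall>x\<in>K. morphnet_eval N x = (\<Sum>i<m. \<alpha> (Suc i) * \<sigma> (Suc i) *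
        Max ((\<lambda>r. W (Suc i) r \<bullet> x + b (Suc i) r) ` {..k (Suc i)}))"
    using dilation_morphnet_sum_of_max_affine[OF compact_imp_bounded[OF assms(1)],
        where m=m and a="\<lambda>i. \<alpha> (Suc i) * \<sigma> (Suc i)" and W="\<lambda>i. W (Suc i)"
          and b="\<lambda>i. b (Suc i)" and k="\<lambda>i. k (Suc i)"] by blast
  have "(\<Sum>i=1..m. \<alpha> i * h i x) = (\<Sum>i<m. \<alpha> (Suc i) * \<sigma> (Suc i) *
          Max ((\<lambda>r. W (Suc i) r \<bullet> x + b (Suc i) r) ` {..k (Suc i)}))" for x
    using hinge by (simp add: sum.atLeast1_atMost_eq mult.assoc)
  with N show ?thesis by metis
qed

end
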